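(* Let $\mathcal A_+,\mathcal A_-\subseteq\mathbb R^n$ be disjoint finite sets with $\mathcal A=\mathcal A_+\cup\mathcal A_-$ full dimensional. Let $\Lambda=\{\Delta_1,\dots,\Delta_r\}$ be full-dimensional simplices with vertices in $\mathcal A_+$ such that $\mathcal A_-\subseteq\Delta_j$ for all $j\in[r]$, and let $\Gamma_j$ be the smallest face of $\Delta_j$ containing $\mathcal A_-$. Let $f\in\mathcal S(\mathcal A_+,\mathcal A_-)$ have nonsigned coefficients $c\in\mathbb R^{\mathcal A}_{>0}$ and suppose $\mathbb 1\in\operatorname{Sing}_{>0}(f)$. Let $\mathcal Z=\mathcal Z(\Lambda,c)$. Then: (i) $\mathcal Z\subseteq\{\delta\in\mathbb R^r:\sum_{i=1}^r\delta_i=1\}$. (ii) If $\delta\in\mathcal Z\cap\mathbb R^r_{\ge0}$ and $J=\{j\in[r]:\delta_j>0\}$, then for each $j\in J$ the signomial $$q_j=\sum_{a\in\operatorname{vertices}(\Gamma_j)}\delta_j\Big(\sum_{b\in\mathcal A_-}\lambda^b_{a,j}c_b\Big)x^a-\sum_{b\in\mathcal A_-}\delta_jc_bx^b$$ has signed support $(\operatorname{vertices}(\Gamma_j),\mathcal A_-)$, which is an extended circuit, and satisfies $\mathbb 1\in\operatorname{Sing}_{>0}(q_j)$; moreover $f=\sum_{j\in J}q_j$, and $f$ is SONC.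
   Context: A signomial with signed support $(\mathcal A_+,\mathcal A_-)$ is $f(x)=\sum_{a\in\mathcal A_+}c_ax^a-\sum_{b\in\mathcal A_-}c_bx^b$ on $\mathbb R^n_{>0}$ with all $c_a,c_b>0$ (nonsigned coefficients); $\mathcal S(\mathcal A_+,\mathcal A_-)$ is the set of these. Full dimensional: $\dim\operatorname{conv}(\mathcal A)=n$. $\operatorname{Sing}_{>0}(f)$ is the set of $x\in\mathbb R^n_{>0}$ with $f(x)=x_1\partial_{x_1}f(x)=\dots=x_n\partial_{x_n}f(x)=0$; $\mathbb 1=(1,\dots,1)$. $\lambda^b_{a,k}\in[0,1]$ ($a\in\operatorname{vertices}(\Delta_k)$) are the barycentric coordinates of $b$ w.r.t. the vertices of $\Delta_k$, i.e. $b=\sum_a\lambda^b_{a,k}a$, $\sum_a\lambda^b_{a,k}=1$. $\mathcal Z(\Lambda,c)\subseteq\mathbb R^r$ is the solution set of the linear system in $\delta_1,\dots,\delta_r$: $c_a=\sum_{k:\,a\in\operatorname{vertices}(\Delta_k)}\delta_k\big(\sum_{b\in\mathcal A_-}\lambda^b_{a,k}c_b\big)$ for all $a\in\mathcal A_+$. $(\mathcal B_+,\mathcal B_-)$ is an extended circuit if $\#(\mathcal B_+\cup\mathcal B_-)=\#\mathcal B_+=1$ or $\operatorname{conv}(\mathcal B_+\cup\mathcal B_-)$ is a simplex with vertex set $\mathcal B_+$; a circuit if moreover (in the second case) $\#\mathcal B_-=1$ and $\mathcal B_-\subseteq\operatorname{relint}\operatorname{conv}(\mathcal B_+)$. A signomial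 is SONC if it is a finite sum of copositive signomials whose signed supports are circuits. *)

theory Defs
  imports "HOL-Analysis.Analysis"
begin

definition pos_orthant :: "(real^'n) set" where
  "pos_orthant = {x. \<forall>i. 0 < x $ i}"

definition xpow :: "real^'n \<Rightarrow> real^'n \<Rightarrow> real" where
  "xpow x a = (\<Prod>i\<in>UNIV. (x $ i) powr (a $ i))"

definition signomial :: "(real^'n) set \<Rightarrow> (real^'n) set \<Rightarrow> (real^'n \<Rightarrow> real) \<Rightarrow> real^'n \<Rightarrow> real" where
  "signomial P M c x = (\<Sum>a\<in>P. c a * xpow x a) - (\<Sum>b\<in>M. c b * xpow x b)"

definition sig_set :: "(real^'n) set \<Rightarrow> (real^'n) set \<Rightarrow> (real^'n \<Rightarrow> real) set" where
  "sig_set P M = {f. finite P \<and> finite M \<and> P \<inter> M = {} \<and>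
     (\<exists>c. (\<forall>a\<in>P \<union> M. 0 < c a) \<and> (\<forall>x\<in>pos_orthant. f x = signomial P M c x))}"

definition sing_pos :: "(real^'n \<Rightarrow> real) \<Rightarrow> (real^'n) set" where
  "sing_pos f = {x\<in>pos_orthant. f x = 0 \<and>
     (\<forall>i. \<exists>D. ((\<lambda>t. f (\<chi> j. if j = i then t else x $ j)) has_real_derivative D) (at (x $ i))
              \<and> x $ i * D = 0)}"

definition vertices :: "(real^'n) set \<Rightarrow> (real^'n) set" where
  "vertices S = {v. v extreme_point_of S}"

definition smallest_face :: "(real^'n) set \<Rightarrow> (real^'n) set \<Rightarrow> (real^'n) set" where
  "smallest_face S A = \<Inter>{F. F face_of S \<and> A \<subseteq> F}"

text \<open>Barycentric coordinate of b with respect to vertex a of the affinely independent set V.\<close>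
definition bary :: "(real^'n) set \<Rightarrow> real^'n \<Rightarrow> real^'n \<Rightarrow> real" where
  "bary V b a = (THE l. (\<forall>v. v \<notin> V \<longrightarrow> l v = 0) \<and> sum l V = 1 \<and> (\<Sum>v\<in>V. l v *\<^sub>R v) = b) a"

text \<open>Z(Lambda,c) in R^r, vectors represented as functions on {1..r} (zero outside).\<close>
definition Zset :: "nat \<Rightarrow> (nat \<Rightarrow> (real^'n) set) \<Rightarrow> (real^'n) set \<Rightarrow> (real^'n) set
    \<Rightarrow> (real^'n \<Rightarrow> real) \<Rightarrow> (nat \<Rightarrow> real) set" where
  "Zset r D Ap Am c = {\<delta>. (\<forall>k. k \<notin> {1..r} \<longrightarrow> \<delta> k = 0) \<and>
     (\<forall>a\<in>Ap. c a = (\<Sum>k\<in>{k\<in>{1..r}. a \<in> vertices (D k)}.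
                       \<delta> k * (\<Sum>b\<in>Am. bary (vertices (D k)) b a * c b)))}"

definition ext_circuit :: "(real^'n) set \<Rightarrow> (real^'n) set \<Rightarrow> bool" where
  "ext_circuit P M \<longleftrightarrow>
     (card (P \<union> M) = 1 \<and> card P = 1) \<or>
     ((\<exists>d\<ge>0. d simplex (convex hull (P \<union> M))) \<and> vertices (convex hull (P \<union> M)) = P)"

definition circuit :: "(real^'n) set \<Rightarrow> (real^'n) set \<Rightarrow> bool" where
  "circuit P M \<longleftrightarrow>
     (card (P \<union> M) = 1 \<and> card P = 1) \<or>
     ((\<exists>d\<ge>0. d simplex (convex hull (P \<union> M))) \<and> vertices (convex hull (P \<union> M)) = P
       \<and> card M = 1 \<and> M \<subseteq> rel_interior (convex hull P))"

definition sonc :: "(real^'n \<Rightarrow> real) \<Rightarrow> bool" where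
  "sonc f \<longleftrightarrow> (\<exists>(m::nat) P M g. (\<forall>i<m. circuit (P i) (M i) \<and> g i \<in> sig_set (P i) (M i)
        \<and> (\<forall>x\<in>pos_orthant. 0 \<le> g i x))
      \<and> (\<forall>x\<in>pos_orthant. f x = (\<Sum>i<m. g i x)))"

end

(* Let delta be in Z(Lambda, c) and write lambda^b_{a,k} for the barycentric coordinates.
   Substituting c_a = sum_k delta_k sum_b lambda^b_{a,k} c_b into sum_a c_a x^a and regrouping gives

     f = sum_k delta_k sum_b c_b (sum_a lambda^b_{a,k} x^a - x^b) + (1 - sum_k delta_k) sum_b c_b x^b.

   The brackets vanish at x = 1, where f vanishes too, and sum_b c_b > 0; hence sum_k delta_k = 1.
   A bracket only involves the vertices a of Delta_k with lambda^b_{a,k} > 0. They span a simplex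
   with b in its relative interior, so the bracket is a circuit signomial, nonnegative by the
   weighted AM-GM inequality. For delta >= 0 this writes f as a sum of nonnegative circuit
   signomials. Collecting the terms of one simplex gives q_j: its positive support is the union of
   the barycentric supports of the points of A_-, which is the vertex set of Gamma_j, and the
   barycentric identities balance its coefficients and their exponent-weighted sums, which makes
   1 a singular point. *)

theory Submission
  imports Defs
begin

section \<open>Barycentric coordinates\<close>

lemma bary_eqI:
  fixes C S :: "(real^'n) set"
  assumes ind: "\<not> affine_dependent C" and SC: "S \<subseteq> C"
    and u1: "sum u S = 1" and ub: "(\<Sum>v\<in>S. u v *\<^sub>R v) = b"
  shows "bary C b = (\<lambda>v. if v \<in> S then u v else 0)"
proof -
  define l where "l v = (if v \<in> S then u v else 0)" for v
  have finC: "finite C" using aff_independent_finite ind by blast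
  have l_on_S: "v \<in> S \<Longrightarrow> l v = u v" and l_off_S: "v \<in> C - S \<Longrightarrow> l v = 0" for v
    by (simp_all add: l_def)
  have sum_l: "sum l C = sum u S"
    by (simp add: sum.mono_neutral_right[OF finC SC] l_off_S l_on_S)
  have sum_l_scaleR: "(\<Sum>v\<in>C. l v *\<^sub>R v) = (\<Sum>v\<in>S. u v *\<^sub>R v)"
    by (simp add: sum.mono_neutral_right[OF finC SC] l_off_S l_on_S)
  have l_out: "\<forall>v. v \<notin> C \<longrightarrow> l v = 0" using SC by (auto simp: l_def)
  let ?P = "\<lambda>l. (\<forall>v. v \<notin> C \<longrightarrow> l v = 0) \<and> sum l C = 1 \<and> (\<Sum>v\<in>C. l v *\<^sub>R v) = b"
  have "?P l"
    using l_out u1 ub sum_l sum_l_scaleR by simp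
  moreover have "l' = l" if "?P l'" for l'
  proof (rule ccontr)
    assume "l' \<noteq> l"
    then obtain v where v: "l' v \<noteq> l v" by blast
    with that l_out have "v \<in> C" by (cases "v \<in> C") simp_all
    moreover have "sum (\<lambda>v. l' v - l v) C = 0" "(\<Sum>v\<in>C. (l' v - l v) *\<^sub>R v) = 0"
      using that \<open>?P l\<close> by (simp_all add: sum_subtractf scaleR_diff_left)
    ultimately have "\<exists>U. sum U C = 0 \<and> (\<exists>v\<in>C. U v \<noteq> 0) \<and> (\<Sum>v\<in>C. U v *\<^sub>R v) = 0"
      using v by (intro exI[of _ "\<lambda>v. l' v - l v"] conjI bexI[of _ v]) simp_all
    then have "affine_dependent C" using affine_dependent_explicit_finite[OF finC] by blast
    with ind show False by blast
  qed
  ultimately have "(THE l. ?P l) = l" by (rule the_equality[of ?P l])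
  then show ?thesis unfolding bary_def by (simp add: l_def fun_eq_iff)
qed

definition bary_support :: "(real^'n) set \<Rightarrow> real^'n \<Rightarrow> (real^'n) set" where
  "bary_support C b = {a \<in> C. 0 < bary C b a}"

lemma finite_bary_support:
  fixes C :: "(real^'n) set"
  assumes "\<not> affine_dependent C"
  shows "finite (bary_support C b)"
  using aff_independent_finite[OF assms] unfolding bary_support_def by simp

lemma aff_independent_bary_support:
  fixes C :: "(real^'n) set"
  assumes "\<not> affine_dependent C"
  shows "\<not> affine_dependent (bary_support C b)"
  by (rule affine_independent_subset[OF assms]) (auto simp: bary_support_def)

lemma
  fixes C S :: "(real^'n) set"
  assumes ind: "\<not> affine_dependent C" and SC: "S \<subseteq> C" and b: "b \<in> convex hull S"
  shows bary_nonneg: "0 \<le> bary C b v"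
    and bary_eq_0: "v \<notin> S \<Longrightarrow> bary C b v = 0"
    and bary_support_subset: "bary_support C b \<subseteq> S"
proof -
  have "finite S" using aff_independent_finite ind SC finite_subset by blast
  then obtain u where u: "\<forall>v\<in>S. 0 \<le> u v" "sum u S = 1" "(\<Sum>v\<in>S. u v *\<^sub>R v) = b"
    using b convex_hull_finite by blast
  note bary = bary_eqI[OF ind SC u(2,3)]
  show "0 \<le> bary C b v" "v \<notin> S \<Longrightarrow> bary C b v = 0"
    using u(1) by (simp_all add: bary)
  then show "bary_support C b \<subseteq> S"
    unfolding bary_support_def by (auto simp: bary)
qed

lemma
  fixes C :: "(real^'n) set" and g :: "real^'n \<Rightarrow> 'a::real_vector"
  assumes ind: "\<not> affine_dependent C" and b: "b \<in> convex hull C"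
  shows sum_bary_superset: "finite T \<Longrightarrow> bary_support C b \<subseteq> T \<Longrightarrow>
      (\<Sum>v\<in>T. bary C b v *\<^sub>R g v) = (\<Sum>v\<in>bary_support C b. bary C b v *\<^sub>R g v)"
    and sum_bary_support: "sum (bary C b) (bary_support C b) = 1"
    and sum_bary_support_scaleR: "(\<Sum>v\<in>bary_support C b. bary C b v *\<^sub>R v) = b"
proof -
  have zero: "bary C b v = 0" if "v \<notin> bary_support C b" for v
    using that bary_nonneg[OF ind subset_refl b, of v] bary_eq_0[OF ind subset_refl b, of v]
    unfolding bary_support_def by (cases "v \<in> C") auto
  show superset: "(\<Sum>v\<in>T. bary C b v *\<^sub>R g v) = (\<Sum>v\<in>bary_support C b. bary C b v *\<^sub>R g v)"
    if "finite T" "bary_support C b \<subseteq> T" for T and g :: "real^'n \<Rightarrow> 'b::real_vector"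
    by (rule sum.mono_neutral_right) (use that zero in auto)
  have finC: "finite C" using aff_independent_finite ind by blast
  obtain u where u: "\<forall>v\<in>C. 0 \<le> u v" "sum u C = 1" "(\<Sum>v\<in>C. u v *\<^sub>R v) = b"
    using b convex_hull_finite[OF finC] by blast
  have "bary C b v = u v" if "v \<in> C" for v
    using that by (simp add: bary_eqI[OF ind subset_refl u(2,3)])
  then have "sum (bary C b) C = 1" "(\<Sum>v\<in>C. bary C b v *\<^sub>R v) = b"
    using u by simp_all
  moreover have "bary_support C b \<subseteq> C" unfolding bary_support_def by blast
  ultimately show "sum (bary C b) (bary_support C b) = 1"
    "(\<Sum>v\<in>bary_support C b. bary C b v *\<^sub>R v) = b"
    using superset[OF finC, of "\<lambda>_. 1::real"] superset[OF finC, of id] by simp_all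
qed

lemma bary_support_nonempty:
  fixes C :: "(real^'n) set"
  assumes "\<not> affine_dependent C" and "b \<in> convex hull C"
  shows "bary_support C b \<noteq> {}"
  using sum_bary_support[OF assms] by auto

lemma in_rel_interior_bary_support:
  fixes C :: "(real^'n) set"
  assumes ind: "\<not> affine_dependent C" and b: "b \<in> convex hull C"
  shows "b \<in> rel_interior (convex hull (bary_support C b))"
  unfolding rel_interior_convex_hull_explicit[OF aff_independent_bary_support[OF ind]]
  using sum_bary_support[OF ind b] sum_bary_support_scaleR[OF ind b]
  by (intro CollectI exI[of _ "bary C b"]) (simp add: bary_support_def)

lemma in_convex_hull_bary_support:
  fixes C :: "(real^'n) set"
  assumes "\<not> affine_dependent C" and "b \<in> convex hull C"
  shows "b \<in> convex hull (bary_support C b)"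
  using in_rel_interior_bary_support[OF assms] rel_interior_subset by blast

lemma subset_convex_hull_Union_bary_support:
  fixes C M :: "(real^'n) set"
  assumes ind: "\<not> affine_dependent C" and M: "M \<subseteq> convex hull C"
  shows "M \<subseteq> convex hull (\<Union>b\<in>M. bary_support C b)"
proof
  fix b assume "b \<in> M"
  then have "convex hull (bary_support C b) \<subseteq> convex hull (\<Union>b\<in>M. bary_support C b)"
    by (intro hull_mono) blast
  with in_convex_hull_bary_support[OF ind] M \<open>b \<in> M\<close> show "b \<in> convex hull (\<Union>b\<in>M. bary_support C b)"
    by blast
qed

section \<open>Faces of a simplex and circuits\<close>

lemma vertices_convex_hull:
  fixes S :: "(real^'n) set"
  assumes "\<not> affine_dependent S"
  shows "vertices (convex hull S) = S"
  unfolding vertices_def using extreme_point_of_convex_hull_affine_independent[OF assms] by auto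

lemma simplex_vertices:
  fixes S :: "(real^'n) set"
  assumes "d simplex S"
  shows "\<not> affine_dependent (vertices S)" and "S = convex hull (vertices S)"
proof -
  obtain C where "\<not> affine_dependent C" "S = convex hull C"
    using assms unfolding simplex by blast
  then show "\<not> affine_dependent (vertices S)" "S = convex hull (vertices S)"
    by (simp_all add: vertices_convex_hull)
qed

lemma smallest_face_convex_hull:
  fixes C M :: "(real^'n) set"
  assumes ind: "\<not> affine_dependent C" and M: "M \<subseteq> convex hull C"
  shows "smallest_face (convex hull C) M = convex hull (\<Union>b\<in>M. bary_support C b)"
proof -
  let ?G = "smallest_face (convex hull C) M" and ?T = "\<Union>b\<in>M. bary_support C b"
  have minimal: "?G \<subseteq> F" if "F face_of convex hull C" "M \<subseteq> F" for F
    unfolding smallest_face_def using that by (intro Inter_lower) simp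
  have "?G face_of convex hull C"
    unfolding smallest_face_def
    by (rule face_of_Inter) (use M face_of_refl[OF convex_convex_hull] in auto)
  then obtain S where SC: "S \<subseteq> C" and G: "?G = convex hull S"
    using face_of_convex_hull_affine_independent[OF ind] by blast
  have "M \<subseteq> convex hull S" unfolding G[symmetric] smallest_face_def by blast
  then have "?T \<subseteq> S"
    using bary_support_subset[OF ind SC] by (meson UN_least subsetD)
  then have "convex hull ?T \<subseteq> ?G" unfolding G by (rule hull_mono)
  moreover have "?T \<subseteq> C" unfolding bary_support_def by blast
  then have "convex hull ?T face_of convex hull C"
    using face_of_convex_hull_affine_independent[OF ind] by blast
  moreover have "M \<subseteq> convex hull ?T" by (rule subset_convex_hull_Union_bary_support[OF ind M])
  ultimately show ?thesis using minimal by blast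
qed

lemma vertices_smallest_face:
  fixes C M :: "(real^'n) set"
  assumes ind: "\<not> affine_dependent C" and M: "M \<subseteq> convex hull C"
  shows "vertices (smallest_face (convex hull C) M) = (\<Union>b\<in>M. bary_support C b)"
proof -
  have "\<not> affine_dependent (\<Union>b\<in>M. bary_support C b)"
    by (rule affine_independent_subset[OF ind]) (auto simp: bary_support_def)
  then show ?thesis
    by (simp add: smallest_face_convex_hull[OF ind M] vertices_convex_hull)
qed

lemma simplex_convex_hull_Un:
  fixes S M :: "(real^'n) set"
  assumes ind: "\<not> affine_dependent S" and "S \<noteq> {}" and "M \<subseteq> convex hull S"
  shows "\<exists>d\<ge>0. d simplex (convex hull (S \<union> M))" and "vertices (convex hull (S \<union> M)) = S"
proof -
  have hull: "convex hull (S \<union> M) = convex hull S"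
  proof (rule subset_antisym)
    show "convex hull (S \<union> M) \<subseteq> convex hull S"
      by (rule hull_minimal) (use assms(3) hull_subset[of S convex] in auto)
    show "convex hull S \<subseteq> convex hull (S \<union> M)" by (rule hull_mono) blast
  qed
  have "finite S" using aff_independent_finite ind by blast
  then have "int (card S) - 1 \<ge> 0" using \<open>S \<noteq> {}\<close> by (simp add: Suc_le_eq card_gt_0_iff)
  moreover have "(int (card S) - 1) simplex (convex hull S)"
    by (rule simplex_convex_hull) (use ind in simp)
  ultimately show "\<exists>d\<ge>0. d simplex (convex hull (S \<union> M))" unfolding hull by blast
  show "vertices (convex hull (S \<union> M)) = S" unfolding hull by (rule vertices_convex_hull[OF ind])
qed

lemma ext_circuit_aff_independent:
  fixes S M :: "(real^'n) set"
  assumes "\<not> affine_dependent S" and "S \<noteq> {}" and "M \<subseteq> convex hull S"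
  shows "ext_circuit S M"
  unfolding ext_circuit_def using simplex_convex_hull_Un[OF assms] by blast

lemma circuit_bary_support:
  fixes C :: "(real^'n) set"
  assumes ind: "\<not> affine_dependent C" and b: "b \<in> convex hull C"
  shows "circuit (bary_support C b) {b}"
proof -
  have "{b} \<subseteq> convex hull (bary_support C b)"
    using in_convex_hull_bary_support[OF ind b] by blast
  with aff_independent_bary_support[OF ind] bary_support_nonempty[OF ind b] have "(\<exists>d\<ge>0. d simplex convex hull (bary_support C b \<union> {b}))
      \<and> vertices (convex hull (bary_support C b \<union> {b})) = bary_support C b"
    using simplex_convex_hull_Un by blast
  then show ?thesis
    unfolding circuit_def using in_rel_interior_bary_support[OF ind b] by simp
qed

section \<open>Monomials and signomials\<close>

lemma one_in_pos_orthant: "(\<chi> i. 1) \<in> pos_orthant"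
  unfolding pos_orthant_def by simp

lemma xpow_one: "xpow (\<chi> i. 1) a = 1"
  unfolding xpow_def by simp

lemma xpow_axis_line: "xpow (\<chi> k. if k = i then t else 1) a = t powr (a $ i)"
proof -
  have "xpow (\<chi> k. if k = i then t else 1) a = (\<Prod>k\<in>UNIV. if k = i then t powr (a $ i) else 1)"
    unfolding xpow_def by (rule prod.cong) auto
  also have "\<dots> = t powr (a $ i)" by (simp add: prod.delta)
  finally show ?thesis .
qed

lemma xpow_eq_exp_inner:
  assumes "x \<in> pos_orthant"
  shows "xpow x a = exp (\<Sum>i\<in>UNIV. a $ i * ln (x $ i))"
proof -
  have pos: "0 < x $ i" for i
    using assms unfolding pos_orthant_def by blast
  have "x $ i powr a $ i = exp (a $ i * ln (x $ i))" for i
    using pos[of i] by (simp add: powr_def)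
  then have "xpow x a = (\<Prod>i\<in>UNIV. exp (a $ i * ln (x $ i)))"
    unfolding xpow_def by simp
  then show ?thesis by (simp add: exp_sum)
qed

text \<open>Weighted AM-GM: the exponent of x^a is linear in a and exp is convex.\<close>
lemma xpow_le_convex_combination:
  fixes P :: "(real^'n) set"
  assumes "finite P" "P \<noteq> {}" "\<And>a. a \<in> P \<Longrightarrow> 0 \<le> l a" "sum l P = 1"
    and b: "(\<Sum>a\<in>P. l a *\<^sub>R a) = b" and x: "x \<in> pos_orthant"
  shows "xpow x b \<le> (\<Sum>a\<in>P. l a * xpow x a)"
proof -
  define L where "L a = (\<Sum>i\<in>UNIV. a $ i * ln (x $ i))" for a :: "real^'n"
  have "L b = (\<Sum>i\<in>UNIV. \<Sum>a\<in>P. l a * (a $ i * ln (x $ i)))"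
    unfolding L_def b[symmetric] by (simp add: sum_distrib_right mult.assoc)
  also have "\<dots> = (\<Sum>a\<in>P. l a * L a)"
    unfolding L_def by (subst sum.swap) (simp add: sum_distrib_left)
  finally have "xpow x b = exp (\<Sum>a\<in>P. l a *\<^sub>R L a)"
    by (simp add: xpow_eq_exp_inner[OF x] L_def)
  also have "\<dots> \<le> (\<Sum>a\<in>P. l a * exp (L a))"
    by (rule convex_on_sum[OF assms(1,2) exp_convex assms(4,3)]) auto
  finally show ?thesis by (simp add: xpow_eq_exp_inner[OF x] L_def)
qed

lemma signomial_in_sig_set:
  fixes P M :: "(real^'n) set"
  assumes "finite P" "finite M" "P \<inter> M = {}"
    and "\<forall>a\<in>P. 0 < \<alpha> a" "\<forall>b\<in>M. 0 < \<beta> b"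
  shows "(\<lambda>x. (\<Sum>a\<in>P. \<alpha> a * xpow x a) - (\<Sum>b\<in>M. \<beta> b * xpow x b)) \<in> sig_set P M"
proof -
  define c where "c a = (if a \<in> M then \<beta> a else \<alpha> a)" for a
  have "(\<Sum>a\<in>P. \<alpha> a * xpow x a) = (\<Sum>a\<in>P. c a * xpow x a)" for x
    using assms(3) by (intro sum.cong) (auto simp: c_def)
  moreover have "(\<Sum>b\<in>M. \<beta> b * xpow x b) = (\<Sum>b\<in>M. c b * xpow x b)" for x
    by (intro sum.cong) (auto simp: c_def)
  moreover have "\<forall>a\<in>P \<union> M. 0 < c a" using assms(4,5) by (auto simp: c_def)
  ultimately show ?thesis
    unfolding sig_set_def signomial_def using assms(1-3) by auto
qed

text \<open>On the i-th coordinate line through 1 a signomial is t \<mapsto> \<Sum> c t powr a_i, so its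
  value and its derivative at t = 1 are the two balance sums.\<close>
lemma one_in_sing_pos_if_balanced:
  fixes P M :: "(real^'n) set"
  assumes "(\<Sum>a\<in>P. \<alpha> a) = (\<Sum>b\<in>M. \<beta> b)"
    and "(\<Sum>a\<in>P. \<alpha> a *\<^sub>R a) = (\<Sum>b\<in>M. \<beta> b *\<^sub>R b)"
  shows "(\<chi> i. 1) \<in> sing_pos (\<lambda>x. (\<Sum>a\<in>P. \<alpha> a * xpow x a) - (\<Sum>b\<in>M. \<beta> b * xpow x b))"
  unfolding sing_pos_def
proof (intro CollectI conjI allI one_in_pos_orthant)
  show "(\<Sum>a\<in>P. \<alpha> a * xpow (\<chi> i. 1) a) - (\<Sum>b\<in>M. \<beta> b * xpow (\<chi> i. 1) b) = 0"
    using assms(1) by (simp add: xpow_one)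
  fix i :: 'n
  have line: "(\<chi> j. if j = i then t else (\<chi> k. (1::real)) $ j) = (\<chi> j. if j = i then t else 1)" for t
    by (simp add: vec_eq_iff)
  have powr: "((\<lambda>t. t powr (a $ i)) has_real_derivative a $ i) (at 1)" for a :: "real^'n"
    using has_real_derivative_powr[of 1 "a $ i"] by simp
  have "((\<lambda>t. (\<Sum>a\<in>P. \<alpha> a * t powr (a $ i)) - (\<Sum>b\<in>M. \<beta> b * t powr (b $ i)))
      has_real_derivative (\<Sum>a\<in>P. \<alpha> a * a $ i) - (\<Sum>b\<in>M. \<beta> b * b $ i)) (at 1)"
    by (intro DERIV_diff DERIV_sum DERIV_cmult powr)
  moreover have "(\<Sum>a\<in>P. \<alpha> a * a $ i) - (\<Sum>b\<in>M. \<beta> b * b $ i) = 0"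
    using arg_cong[OF assms(2), of "\<lambda>v. v $ i"] by simp
  ultimately show "\<exists>D. ((\<lambda>t. (\<Sum>a\<in>P. \<alpha> a * xpow (\<chi> j. if j = i then t else (\<chi> k. 1) $ j) a)
        - (\<Sum>b\<in>M. \<beta> b * xpow (\<chi> j. if j = i then t else (\<chi> k. 1) $ j) b))
      has_real_derivative D) (at ((\<chi> k. 1) $ i)) \<and> (\<chi> k. 1) $ i * D = 0"
    by (auto simp: line xpow_axis_line)
qed

lemma sonc_if_sum_of_nonneg_circuits:
  fixes I :: "'i set" and g :: "'i \<Rightarrow> real^'n \<Rightarrow> real"
  assumes "finite I"
    and "\<And>i. i \<in> I \<Longrightarrow> circuit (P i) (M i) \<and> g i \<in> sig_set (P i) (M i) \<and> (\<forall>x\<in>pos_orthant. 0 \<le> g i x)"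
    and "\<forall>x\<in>pos_orthant. f x = (\<Sum>i\<in>I. g i x)"
  shows "sonc f"
proof -
  obtain h where h: "bij_betw h {..<card I} I"
    using ex_bij_betw_nat_finite[OF assms(1)] by (auto simp: atLeast0LessThan)
  then have "h i \<in> I" if "i < card I" for i
    using that bij_betwE by blast
  moreover have "(\<Sum>i<card I. g (h i) x) = (\<Sum>i\<in>I. g i x)" for x
    using sum.reindex_bij_betw[OF h, of "\<lambda>i. g i x"] by simp
  ultimately show ?thesis
    unfolding sonc_def using assms(2,3)
    by (intro exI[of _ "card I"] exI[of _ "P \<circ> h"] exI[of _ "M \<circ> h"] exI[of _ "g \<circ> h"]) auto
qed

section \<open>Circuit decomposition\<close>

definition bary_circuit :: "(real^'n) set \<Rightarrow> real^'n \<Rightarrow> real^'n \<Rightarrow> real" where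
  "bary_circuit C b x = (\<Sum>a\<in>bary_support C b. bary C b a * xpow x a) - xpow x b"

lemma bary_circuit_nonneg:
  fixes C :: "(real^'n) set"
  assumes ind: "\<not> affine_dependent C" and b: "b \<in> convex hull C" and x: "x \<in> pos_orthant"
  shows "0 \<le> bary_circuit C b x"
proof -
  from bary_support_nonempty[OF ind b] have "xpow x b \<le> (\<Sum>a\<in>bary_support C b. bary C b a * xpow x a)"
    using finite_bary_support[OF ind] sum_bary_support[OF ind b] sum_bary_support_scaleR[OF ind b]
      bary_nonneg[OF ind subset_refl b] x
    by (intro xpow_le_convex_combination) auto
  then show ?thesis unfolding bary_circuit_def by simp
qed

lemma bary_circuit_in_sig_set:
  fixes C :: "(real^'n) set"
  assumes ind: "\<not> affine_dependent C" and "b \<notin> C" and "0 < w"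
  shows "(\<lambda>x. w * bary_circuit C b x) \<in> sig_set (bary_support C b) {b}"
proof -
  have "(\<lambda>x. w * bary_circuit C b x) =
      (\<lambda>x. (\<Sum>a\<in>bary_support C b. w * bary C b a * xpow x a) - (\<Sum>b'\<in>{b}. w * xpow x b'))"
    by (simp add: bary_circuit_def fun_eq_iff right_diff_distrib sum_distrib_left mult.assoc)
  also have "\<dots> \<in> sig_set (bary_support C b) {b}"
    using finite_bary_support[OF ind] assms(2,3)
    by (intro signomial_in_sig_set) (auto simp: bary_support_def)
  finally show ?thesis .
qed

lemma sonc_sum_bary_circuits:
  fixes C :: "'i \<Rightarrow> (real^'n) set"
  assumes "finite I"
    and "\<And>i. i \<in> I \<Longrightarrow> \<not> affine_dependent (C i) \<and> b i \<in> convex hull (C i) - C i \<and> 0 < w i"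
    and "\<forall>x\<in>pos_orthant. f x = (\<Sum>i\<in>I. w i * bary_circuit (C i) (b i) x)"
  shows "sonc f"
proof (rule sonc_if_sum_of_nonneg_circuits[OF assms(1) _ assms(3)])
  fix i assume "i \<in> I"
  with assms(2) have ind: "\<not> affine_dependent (C i)" and b: "b i \<in> convex hull (C i)" "b i \<notin> C i"
    and w: "0 < w i" by auto
  show "circuit (bary_support (C i) (b i)) {b i} \<and>
      (\<lambda>x. w i * bary_circuit (C i) (b i) x) \<in> sig_set (bary_support (C i) (b i)) {b i} \<and>
      (\<forall>x\<in>pos_orthant. 0 \<le> w i * bary_circuit (C i) (b i) x)"
    using circuit_bary_support[OF ind b(1)] bary_circuit_in_sig_set[OF ind b(2) w]
      bary_circuit_nonneg[OF ind b(1)] w by simp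
qed

lemma sum_bary_weights:
  fixes C M S :: "(real^'n) set" and g :: "real^'n \<Rightarrow> 'a::real_vector"
  assumes ind: "\<not> affine_dependent C" and M: "M \<subseteq> convex hull C"
    and "finite S" and "(\<Union>b\<in>M. bary_support C b) \<subseteq> S"
  shows "(\<Sum>a\<in>S. (\<Sum>b\<in>M. bary C b a * c b) *\<^sub>R g a)
    = (\<Sum>b\<in>M. c b *\<^sub>R (\<Sum>a\<in>bary_support C b. bary C b a *\<^sub>R g a))"
proof -
  have "(\<Sum>a\<in>S. (\<Sum>b\<in>M. bary C b a * c b) *\<^sub>R g a) = (\<Sum>b\<in>M. c b *\<^sub>R (\<Sum>a\<in>S. bary C b a *\<^sub>R g a))"
    by (simp add: scaleR_sum_left scaleR_sum_right sum.swap[of _ S] mult.commute)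
  also have "\<dots> = (\<Sum>b\<in>M. c b *\<^sub>R (\<Sum>a\<in>bary_support C b. bary C b a *\<^sub>R g a))"
  proof (intro sum.cong refl)
    fix b assume "b \<in> M"
    then have "b \<in> convex hull C" "bary_support C b \<subseteq> S" using M assms(4) by auto
    then show "c b *\<^sub>R (\<Sum>a\<in>S. bary C b a *\<^sub>R g a) = c b *\<^sub>R (\<Sum>a\<in>bary_support C b. bary C b a *\<^sub>R g a)"
      by (simp add: sum_bary_superset[OF ind _ assms(3)])
  qed
  finally show ?thesis .
qed

lemma sum_bary_weight_pos:
  fixes C M :: "(real^'n) set"
  assumes ind: "\<not> affine_dependent C" and M: "M \<subseteq> convex hull C" "finite M"
    and c: "\<forall>b\<in>M. 0 < c b" and b: "b \<in> M" "a \<in> bary_support C b"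
  shows "0 < (\<Sum>b\<in>M. bary C b a * c b)"
proof (rule sum_pos2[OF M(2) b(1)])
  show "0 < bary C b a * c b" using b c unfolding bary_support_def by simp
  show "0 \<le> bary C b' a * c b'" if "b' \<in> M" for b'
    using that M(1) c bary_nonneg[OF ind subset_refl] by (simp add: less_imp_le subset_eq)
qed

lemma
  fixes V M :: "(real^'n) set" and c :: "real^'n \<Rightarrow> real"
  assumes ind: "\<not> affine_dependent V" and M: "M \<subseteq> convex hull V" "finite M" "M \<noteq> {}" "M \<inter> V = {}"
    and c: "\<forall>b\<in>M. 0 < c b" and d: "0 < d" and S: "S = (\<Union>b\<in>M. bary_support V b)"
  defines "q \<equiv> \<lambda>x. (\<Sum>a\<in>S. d * (\<Sum>b\<in>M. bary V b a * c b) * xpow x a) - (\<Sum>b\<in>M. d * c b * xpow x b)"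
  shows bary_face_signomial_eq: "q x = d * (\<Sum>b\<in>M. c b * bary_circuit V b x)"
    and bary_face_signomial_in_sig_set: "q \<in> sig_set S M"
    and bary_face_ext_circuit: "ext_circuit S M"
    and bary_face_signomial_sing_pos: "(\<chi> i. 1) \<in> sing_pos q"
proof -
  let ?w = "\<lambda>a. \<Sum>b\<in>M. bary V b a * c b"
  have SV: "S \<subseteq> V" unfolding S bary_support_def by blast
  have finS: "finite S" using SV aff_independent_finite[OF ind] finite_subset by blast
  have weights: "(\<Sum>a\<in>S. ?w a *\<^sub>R g a) = (\<Sum>b\<in>M. c b *\<^sub>R (\<Sum>a\<in>bary_support V b. bary V b a *\<^sub>R g a))"
    for g :: "real^'n \<Rightarrow> 'a::real_vector"
    by (rule sum_bary_weights[OF ind M(1) finS]) (simp add: S)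
  have "q x = d * ((\<Sum>a\<in>S. ?w a * xpow x a) - (\<Sum>b\<in>M. c b * xpow x b))"
    by (simp add: q_def right_diff_distrib mult.assoc sum_distrib_left[of d, symmetric])
  also have "\<dots> = d * (\<Sum>b\<in>M. c b * bary_circuit V b x)"
    using weights[of "xpow x"] by (simp add: bary_circuit_def right_diff_distrib sum_subtractf)
  finally show "q x = d * (\<Sum>b\<in>M. c b * bary_circuit V b x)" .
  have "0 < ?w a" if "a \<in> S" for a
    using that sum_bary_weight_pos[OF ind M(1,2) c] unfolding S by blast
  then show "q \<in> sig_set S M"
    unfolding q_def using finS M(2,4) SV c d by (intro signomial_in_sig_set) auto
  obtain b where b: "b \<in> M" using M(3) by blast
  then have "bary_support V b \<subseteq> S" unfolding S by blast
  with bary_support_nonempty[OF ind] M(1) b have "S \<noteq> {}" by blast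
  moreover have "M \<subseteq> convex hull S"
    unfolding S by (rule subset_convex_hull_Union_bary_support[OF ind M(1)])
  ultimately show "ext_circuit S M"
    by (rule ext_circuit_aff_independent[OF affine_independent_subset[OF ind SV]])
  show "(\<chi> i. 1) \<in> sing_pos q"
    unfolding q_def
  proof (rule one_in_sing_pos_if_balanced)
    show "(\<Sum>a\<in>S. d * ?w a) = (\<Sum>b\<in>M. d * c b)"
      using weights[of "\<lambda>_. 1::real"] M(1) sum_bary_support[OF ind]
      by (simp add: sum_distrib_left[symmetric] subset_eq)
    show "(\<Sum>a\<in>S. (d * ?w a) *\<^sub>R a) = (\<Sum>b\<in>M. (d * c b) *\<^sub>R b)"
      using weights[of id] M(1) sum_bary_support_scaleR[OF ind]
      by (simp add: subset_eq flip: scaleR_scaleR scaleR_sum_right)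
  qed
qed

definition simplex_family :: "nat \<Rightarrow> (nat \<Rightarrow> (real^'n) set) \<Rightarrow> (real^'n) set \<Rightarrow> (real^'n) set \<Rightarrow> bool" where
  "simplex_family r D Ap Am \<longleftrightarrow> (\<forall>k\<in>{1..r}. (\<exists>d. d simplex D k) \<and> vertices (D k) \<subseteq> Ap \<and> Am \<subseteq> D k)"

lemma simplex_familyD:
  assumes "simplex_family r D Ap Am" and "k \<in> {1..r}"
  shows "\<not> affine_dependent (vertices (D k))" and "D k = convex hull (vertices (D k))"
    and "vertices (D k) \<subseteq> Ap" and "Am \<subseteq> convex hull (vertices (D k))"
  using assms simplex_vertices unfolding simplex_family_def by metis+

lemma Zset_expansion:
  fixes Ap Am :: "(real^'n) set" and g :: "real^'n \<Rightarrow> real"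
  assumes "finite Ap" and family: "simplex_family r D Ap Am" and \<delta>: "\<delta> \<in> Zset r D Ap Am c"
  shows "(\<Sum>a\<in>Ap. c a * g a) = (\<Sum>k=1..r. \<delta> k *
    (\<Sum>b\<in>Am. c b * (\<Sum>a\<in>bary_support (vertices (D k)) b. bary (vertices (D k)) b a * g a)))"
proof -
  let ?V = "\<lambda>k. vertices (D k)"
  let ?w = "\<lambda>k a. \<Sum>b\<in>Am. bary (?V k) b a * c b"
  have "(\<Sum>a\<in>Ap. c a * g a) = (\<Sum>a\<in>Ap. \<Sum>k\<in>{k\<in>{1..r}. a \<in> ?V k}. \<delta> k * ?w k a * g a)"
    using \<delta> unfolding Zset_def by (intro sum.cong) (auto simp: sum_distrib_right)
  also have "\<dots> = (\<Sum>k\<in>{1..r}. \<Sum>a\<in>{a\<in>Ap. a \<in> ?V k}. \<delta> k * ?w k a * g a)"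
    by (rule sum.swap_restrict) (simp_all add: assms(1))
  also have "\<dots> = (\<Sum>k=1..r. \<delta> k * (\<Sum>a\<in>?V k. ?w k a *\<^sub>R g a))"
  proof (intro sum.cong refl)
    fix k assume "k \<in> {1..r}"
    then have "{a\<in>Ap. a \<in> ?V k} = ?V k" using simplex_familyD(3)[OF family] by blast
    then show "(\<Sum>a\<in>{a\<in>Ap. a \<in> ?V k}. \<delta> k * ?w k a * g a) = \<delta> k * (\<Sum>a\<in>?V k. ?w k a *\<^sub>R g a)"
      by (simp add: mult.assoc flip: sum_distrib_left)
  qed
  also have "\<dots> = (\<Sum>k=1..r. \<delta> k *
      (\<Sum>b\<in>Am. c b * (\<Sum>a\<in>bary_support (?V k) b. bary (?V k) b a * g a)))"
  proof (intro sum.cong refl)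
    fix k assume "k \<in> {1..r}"
    then have ind: "\<not> affine_dependent (?V k)" and hull: "Am \<subseteq> convex hull (?V k)"
      using simplex_familyD[OF family] by auto
    have "(\<Union>b\<in>Am. bary_support (?V k) b) \<subseteq> ?V k" unfolding bary_support_def by blast
    from sum_bary_weights[OF ind hull aff_independent_finite[OF ind] this, of c g]
    show "\<delta> k * (\<Sum>a\<in>?V k. ?w k a *\<^sub>R g a)
        = \<delta> k * (\<Sum>b\<in>Am. c b * (\<Sum>a\<in>bary_support (?V k) b. bary (?V k) b a * g a))"
      by simp
  qed
  finally show ?thesis .
qed

lemma Zset_sum_eq_1:
  fixes Ap Am :: "(real^'n) set"
  assumes "finite Ap" and family: "simplex_family r D Ap Am" and \<delta>: "\<delta> \<in> Zset r D Ap Am c"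
    and balanced: "sum c Ap = sum c Am" and "sum c Am \<noteq> 0"
  shows "(\<Sum>k=1..r. \<delta> k) = 1"
proof -
  have "sum c Am = (\<Sum>k=1..r. \<delta> k * (\<Sum>b\<in>Am. c b))"
  proof -
    have "sum c Ap = (\<Sum>k=1..r. \<delta> k * (\<Sum>b\<in>Am. c b *
        (\<Sum>a\<in>bary_support (vertices (D k)) b. bary (vertices (D k)) b a)))"
      using Zset_expansion[OF assms(1-3), of "\<lambda>_. 1"] by simp
    also have "\<dots> = (\<Sum>k=1..r. \<delta> k * (\<Sum>b\<in>Am. c b))"
    proof (intro sum.cong refl arg_cong2[where f = "(*)"])
      fix k b assume k: "k \<in> {1..r}" and "b \<in> Am"
      then have "b \<in> convex hull (vertices (D k))" using simplex_familyD(4)[OF family k] by blast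
      then show "c b * (\<Sum>a\<in>bary_support (vertices (D k)) b. bary (vertices (D k)) b a) = c b"
        using sum_bary_support[OF simplex_familyD(1)[OF family k]] by simp
    qed
    finally show ?thesis using balanced by simp
  qed
  then show ?thesis using \<open>sum c Am \<noteq> 0\<close> by (simp add: sum_distrib_right[symmetric])
qed

lemma signomial_eq_sum_bary_circuits:
  fixes Ap Am :: "(real^'n) set"
  assumes "finite Ap" and "simplex_family r D Ap Am" and "\<delta> \<in> Zset r D Ap Am c"
    and "(\<Sum>k=1..r. \<delta> k) = 1"
  shows "signomial Ap Am c x = (\<Sum>k=1..r. \<delta> k * (\<Sum>b\<in>Am. c b * bary_circuit (vertices (D k)) b x))"
proof -
  have "signomial Ap Am c x = (\<Sum>a\<in>Ap. c a * xpow x a) - (\<Sum>k=1..r. \<delta> k) * (\<Sum>b\<in>Am. c b * xpow x b)"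
    unfolding signomial_def assms(4) by simp
  also have "\<dots> = (\<Sum>k=1..r. \<delta> k * (\<Sum>b\<in>Am. c b * bary_circuit (vertices (D k)) b x))"
    unfolding Zset_expansion[OF assms(1-3)] bary_circuit_def
    by (simp add: sum_distrib_right right_diff_distrib sum_subtractf)
  finally show ?thesis .
qed

lemma Zset_nonneg_decomposition:
  fixes Ap Am :: "(real^'n) set" and f :: "real^'n \<Rightarrow> real"
  assumes fin: "finite Ap" "finite Am" and disj: "Ap \<inter> Am = {}" and "Am \<noteq> {}"
    and family: "simplex_family r D Ap Am" and cpos: "\<forall>a\<in>Ap \<union> Am. 0 < c a"
    and f: "\<forall>x\<in>pos_orthant. f x = signomial Ap Am c x"
    and \<delta>: "\<delta> \<in> Zset r D Ap Am c" "\<forall>j\<in>{1..r}. 0 \<le> \<delta> j" "(\<Sum>j=1..r. \<delta> j) = 1"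
  defines "J \<equiv> {j\<in>{1..r}. 0 < \<delta> j}"
    and "q \<equiv> \<lambda>j x. (\<Sum>a\<in>vertices (smallest_face (D j) Am).
        \<delta> j * (\<Sum>b\<in>Am. bary (vertices (D j)) b a * c b) * xpow x a) - (\<Sum>b\<in>Am. \<delta> j * c b * xpow x b)"
  shows "\<forall>j\<in>J. q j \<in> sig_set (vertices (smallest_face (D j) Am)) Am
      \<and> ext_circuit (vertices (smallest_face (D j) Am)) Am \<and> (\<chi> i. 1) \<in> sing_pos (q j)"
    and "\<forall>x\<in>pos_orthant. f x = (\<Sum>j\<in>J. q j x)"
    and "sonc f"
proof -
  let ?V = "\<lambda>j. vertices (D j)"
  have J: "j \<in> {1..r}" "0 < \<delta> j" if "j \<in> J" for j
    using that unfolding J_def by auto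
  have c: "\<forall>b\<in>Am. 0 < c b" using cpos by blast
  have hyps: "\<not> affine_dependent (?V j)" "Am \<subseteq> convex hull (?V j)" "Am \<inter> ?V j = {}"
    "vertices (smallest_face (D j) Am) = (\<Union>b\<in>Am. bary_support (?V j) b)" if "j \<in> J" for j
    using simplex_familyD[OF family J(1)[OF that]] disj vertices_smallest_face by (metis, metis, blast, metis)
  note face_lemmas = bary_face_signomial_eq bary_face_signomial_in_sig_set bary_face_ext_circuit
    bary_face_signomial_sing_pos
  note face = face_lemmas[OF hyps(1,2) fin(2) \<open>Am \<noteq> {}\<close> hyps(3) c J(2) hyps(4)]
  show "\<forall>j\<in>J. q j \<in> sig_set (vertices (smallest_face (D j) Am)) Am
      \<and> ext_circuit (vertices (smallest_face (D j) Am)) Am \<and> (\<chi> i. 1) \<in> sing_pos (q j)"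
    unfolding q_def using face(2-4) by blast
  have f_circuits: "f x = (\<Sum>j\<in>J. \<delta> j * (\<Sum>b\<in>Am. c b * bary_circuit (?V j) b x))"
    if "x \<in> pos_orthant" for x
  proof -
    have "f x = (\<Sum>j=1..r. \<delta> j * (\<Sum>b\<in>Am. c b * bary_circuit (?V j) b x))"
      using f that signomial_eq_sum_bary_circuits[OF fin(1) family \<delta>(1,3)] by simp
    also have "\<dots> = (\<Sum>j\<in>J. \<delta> j * (\<Sum>b\<in>Am. c b * bary_circuit (?V j) b x))"
      using \<delta>(2) unfolding J_def by (intro sum.mono_neutral_right) force+
    finally show ?thesis .
  qed
  then show "\<forall>x\<in>pos_orthant. f x = (\<Sum>j\<in>J. q j x)"
    unfolding q_def using face(1) by simp
  have "f x = (\<Sum>(j, b)\<in>J \<times> Am. (\<delta> j * c b) * bary_circuit (?V j) b x)" if "x \<in> pos_orthant" for x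
    unfolding f_circuits[OF that] sum.cartesian_product[symmetric]
    by (simp add: sum_distrib_left mult.assoc)
  then show "sonc f"
  proof (intro sonc_sum_bary_circuits[where C = "?V \<circ> fst" and b = snd and w = "\<lambda>(j, b). \<delta> j * c b"])
    show "finite (J \<times> Am)" using fin(2) unfolding J_def by simp
    fix p assume "p \<in> J \<times> Am"
    then obtain j b where p: "p = (j, b)" "j \<in> J" "b \<in> Am" by blast
    then show "\<not> affine_dependent ((?V \<circ> fst) p) \<and> snd p \<in> convex hull ((?V \<circ> fst) p) - (?V \<circ> fst) p
        \<and> 0 < (\<lambda>(j, b). \<delta> j * c b) p"
      using hyps(1-3)[OF p(2)] J(2)[OF p(2)] c by auto
  qed (auto simp: case_prod_beta)
qed

theorem lemma3p12:
  fixes Ap Am :: "(real^'n) set" and D :: "nat \<Rightarrow> (real^'n) set" and r :: nat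
    and c :: "real^'n \<Rightarrow> real" and f :: "real^'n \<Rightarrow> real"
  assumes fin: "finite Ap" "finite Am" and disj: "Ap \<inter> Am = {}"
    and fulldim: "aff_dim (convex hull (Ap \<union> Am)) = int CARD('n)"
    and simp: "\<forall>k\<in>{1..r}. int CARD('n) simplex D k \<and> vertices (D k) \<subseteq> Ap \<and> Am \<subseteq> D k"
    and distinct: "inj_on D {1..r}"
    and cpos: "\<forall>a\<in>Ap \<union> Am. 0 < c a"
    and f: "\<forall>x\<in>pos_orthant. f x = signomial Ap Am c x"
    and sing: "(\<chi> i. 1) \<in> sing_pos f"
  shows "(\<forall>\<delta>\<in>Zset r D Ap Am c. (\<Sum>i=1..r. \<delta> i) = 1) \<and>
    (\<forall>\<delta>\<in>Zset r D Ap Am c. (\<forall>j\<in>{1..r}. 0 \<le> \<delta> j) \<longrightarrow>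
      (let J = {j\<in>{1..r}. 0 < \<delta> j};
           \<Gamma> = (\<lambda>j. smallest_face (D j) Am);
           q = (\<lambda>j x. (\<Sum>a\<in>vertices (\<Gamma> j). \<delta> j * (\<Sum>b\<in>Am. bary (vertices (D j)) b a * c b) * xpow x a)
                      - (\<Sum>b\<in>Am. \<delta> j * c b * xpow x b))
       in (\<forall>j\<in>J. q j \<in> sig_set (vertices (\<Gamma> j)) Am \<and> ext_circuit (vertices (\<Gamma> j)) Am
                  \<and> (\<chi> i. 1) \<in> sing_pos (q j))
          \<and> (\<forall>x\<in>pos_orthant. f x = (\<Sum>j\<in>J. q j x))
          \<and> sonc f))"
proof -
  have family: "simplex_family r D Ap Am"
    unfolding simplex_family_def using simp by blast
  have "signomial Ap Am c (\<chi> i. 1) = 0"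
    using sing f one_in_pos_orthant unfolding sing_pos_def by auto
  then have balanced: "sum c Ap = sum c Am"
    unfolding signomial_def by (simp add: xpow_one)
  have "Am \<noteq> {}"
  proof
    assume "Am = {}"
    have "Ap = {}"
    proof (rule ccontr)
      assume "Ap \<noteq> {}"
      then have "0 < sum c Ap" using fin(1) cpos by (intro sum_pos) auto
      with balanced \<open>Am = {}\<close> show False by simp
    qed
    with \<open>Am = {}\<close> fulldim show False by simp
  qed
  then have "sum c Am \<noteq> 0" using fin(2) cpos by (simp add: sum_pos less_imp_neq[symmetric])
  then have sum_\<delta>: "(\<Sum>i=1..r. \<delta> i) = 1" if "\<delta> \<in> Zset r D Ap Am c" for \<delta>
    using Zset_sum_eq_1[OF fin(1) family that balanced] by blast
  show ?thesis
    unfolding Let_def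
    using sum_\<delta> Zset_nonneg_decomposition[OF fin disj \<open>Am \<noteq> {}\<close> family cpos f] by blast
qed

end
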